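(* Let $X$ be a distance-regular graph of diameter $d\geq 2$ on $n$ vertices with degree $k$ and $\mu=c_2$. Let $\gamma,\delta>0$. If $k>\gamma n$ and $\mu\leq(1-\delta)k$, then $\mathrm{motion}(X)\geq\gamma\delta n$.
   Context: A connected graph $X$ of diameter $d$ is distance-regular if there are integers $a_i,b_i,c_i$ ($0\le i\le d$) such that for all vertices $v,w$ with $\mathrm{dist}(v,w)=i$, $w$ has exactly $c_i$ neighbours at distance $i-1$, $a_i$ at distance $i$, $b_i$ at distance $i+1$ from $v$; $X$ is $k$-regular with $k=b_0$, and $\mu=c_2$. The motion $\mathrm{motion}(X)$ is the minimum, over non-identity automorphisms of $X$, of the number of vertices not fixed by the automorphism. *)

theory Defs
  imports Main "HOL-Library.Extended_Nat"
begin

definition simple_graph :: "'a set \<Rightarrow> ('a \<Rightarrow> 'a \<Rightarrow> bool) \<Rightarrow> bool" where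
  "simple_graph V E \<longleftrightarrow> finite V \<and> (\<forall>u v. E u v \<longrightarrow> u \<in> V \<and> v \<in> V)
     \<and> (\<forall>u v. E u v \<longrightarrow> E v u) \<and> (\<forall>u. \<not> E u u)"

text \<open>Walks of length m correspond to the m-th relational power of E.\<close>
definition connected_graph :: "'a set \<Rightarrow> ('a \<Rightarrow> 'a \<Rightarrow> bool) \<Rightarrow> bool" where
  "connected_graph V E \<longleftrightarrow> (\<forall>u\<in>V. \<forall>v\<in>V. \<exists>m. (E ^^ m) u v)"

definition gdist :: "('a \<Rightarrow> 'a \<Rightarrow> bool) \<Rightarrow> 'a \<Rightarrow> 'a \<Rightarrow> nat" where
  "gdist E u v = (LEAST m. (E ^^ m) u v)"

definition diameter :: "'a set \<Rightarrow> ('a \<Rightarrow> 'a \<Rightarrow> bool) \<Rightarrow> nat" where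
  "diameter V E = Max {gdist E u v | u v. u \<in> V \<and> v \<in> V}"

definition distance_regular_with ::
  "'a set \<Rightarrow> ('a \<Rightarrow> 'a \<Rightarrow> bool) \<Rightarrow> (nat \<Rightarrow> nat) \<Rightarrow> (nat \<Rightarrow> nat) \<Rightarrow> (nat \<Rightarrow> nat) \<Rightarrow> bool" where
  "distance_regular_with V E a b c \<longleftrightarrow>
     simple_graph V E \<and> V \<noteq> {} \<and> connected_graph V E \<and>
     (\<forall>v\<in>V. \<forall>w\<in>V. let i = gdist E v w in
        card {u\<in>V. E w u \<and> gdist E v u + 1 = i} = c i \<and>
        card {u\<in>V. E w u \<and> gdist E v u = i} = a i \<and>
        card {u\<in>V. E w u \<and> gdist E v u = i + 1} = b i)"

definition is_automorphism :: "'a set \<Rightarrow> ('a \<Rightarrow> 'a \<Rightarrow> bool) \<Rightarrow> ('a \<Rightarrow> 'a) \<Rightarrow> bool" where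
  "is_automorphism V E \<sigma> \<longleftrightarrow> bij_betw \<sigma> V V \<and> (\<forall>u\<in>V. \<forall>v\<in>V. E u v \<longleftrightarrow> E (\<sigma> u) (\<sigma> v))"

text \<open>Motion: minimum number of moved vertices over non-identity automorphisms
  (\<infinity> if the automorphism group is trivial).\<close>
definition motion :: "'a set \<Rightarrow> ('a \<Rightarrow> 'a \<Rightarrow> bool) \<Rightarrow> enat" where
  "motion V E = (INF \<sigma> \<in> {\<sigma>. is_automorphism V E \<sigma> \<and> (\<exists>v\<in>V. \<sigma> v \<noteq> v)}.
                    enat (card {v\<in>V. \<sigma> v \<noteq> v}))"

end

theory Submission
  imports Defs
begin

text \<open>Write k = b 0, \<lambda> = a 1, \<mu> = c 2. If an automorphism \<sigma> moves x, then every vertex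
  of the symmetric difference of the neighbourhoods of x and \<sigma> x is moved, since \<sigma> maps the
  first neighbourhood onto the second. Two distinct vertices have at most \<mu> common neighbours
  if they are non-adjacent, and exactly \<lambda> if they are adjacent. Since the diameter is at
  least 2, some neighbour z of y is at distance 2 from x, and counting the common neighbours
  of y and z gives 2\<lambda> + 3 \<le> k + \<mu>. Either way the symmetric difference has at least
  k - \<mu> \<ge> \<delta>k > \<gamma>\<delta>n elements.\<close>

locale distance_regular_graph =
  fixes V :: "'a set" and E :: "'a \<Rightarrow> 'a \<Rightarrow> bool" and a b c :: "nat \<Rightarrow> nat"
  assumes distance_regular: "distance_regular_with V E a b c"
begin

definition nbhd :: "'a \<Rightarrow> 'a set" where
  "nbhd w = {u\<in>V. E w u}"

lemma simple: "simple_graph V E" and nonempty: "V \<noteq> {}" and connected: "connected_graph V E"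
  using distance_regular unfolding distance_regular_with_def by auto

lemma finite_V: "finite V"
  using simple by (simp add: simple_graph_def)

lemma edge_in_V: "E u v \<Longrightarrow> u \<in> V \<and> v \<in> V"
  using simple by (simp add: simple_graph_def)

lemma edge_sym: "E u v \<Longrightarrow> E v u"
  using simple by (simp add: simple_graph_def)

lemma no_loop: "\<not> E u u"
  using simple by (simp add: simple_graph_def)

lemma finite_nbhd: "finite (nbhd w)"
  using finite_V by (simp add: nbhd_def)

lemma intersection_numbers:
  assumes "v \<in> V" "w \<in> V"
  shows "card {u\<in>V. E w u \<and> gdist E v u + 1 = gdist E v w} = c (gdist E v w)"
    and "card {u\<in>V. E w u \<and> gdist E v u = gdist E v w} = a (gdist E v w)"
    and "card {u\<in>V. E w u \<and> gdist E v u = gdist E v w + 1} = b (gdist E v w)"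
  using distance_regular assms unfolding distance_regular_with_def Let_def by blast+

lemma gdist_self: "gdist E w w = 0"
  by (simp add: gdist_def)

lemma gdist_edge:
  assumes "E w u"
  shows "gdist E w u = 1"
  unfolding gdist_def
proof (rule Least_equality)
  show "(E ^^ 1) w u" using assms by (metis relpowp_1)
  show "1 \<le> m" if "(E ^^ m) w u" for m
    using that assms no_loop by (cases m) auto
qed

lemma edge_if_gdist_eq_1:
  assumes "w \<in> V" "u \<in> V" "gdist E w u = 1"
  shows "E w u"
proof -
  obtain m where "(E ^^ m) w u"
    using connected assms(1,2) unfolding connected_graph_def by blast
  then have "(E ^^ gdist E w u) w u"
    unfolding gdist_def by (rule LeastI)
  then show ?thesis using assms(3) by (metis relpowp_1)
qed

lemma gdist_eq_2:
  assumes "w \<noteq> u" "\<not> E w u" "E w v" "E v u"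
  shows "gdist E w u = 2"
  unfolding gdist_def
proof (rule Least_equality)
  show "(E ^^ 2) w u"
    using assms(3,4) by (auto simp: numeral_2_eq_2 relcompp_apply)
  show "2 \<le> m" if "(E ^^ m) w u" for m
    using that assms(1,2) by (cases m; cases "m - 1") auto
qed

lemma card_nbhd:
  assumes "w \<in> V"
  shows "card (nbhd w) = b 0"
proof -
  have "{u\<in>V. E w u \<and> gdist E w u = gdist E w w + 1} = nbhd w"
    unfolding nbhd_def gdist_self using gdist_edge edge_if_gdist_eq_1 assms by auto
  then show ?thesis
    using intersection_numbers(3)[OF assms assms] by (simp add: gdist_self)
qed

lemma card_common_nbhd_edge:
  assumes "E x y"
  shows "card (nbhd x \<inter> nbhd y) = a 1"
proof -
  have x: "x \<in> V" and y: "y \<in> V" using edge_in_V assms by auto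
  have "{u\<in>V. E y u \<and> gdist E x u = gdist E x y} = nbhd x \<inter> nbhd y"
    unfolding nbhd_def gdist_edge[OF assms] using gdist_edge edge_if_gdist_eq_1 x by auto
  then show ?thesis
    using intersection_numbers(2)[OF x y] by (simp add: gdist_edge[OF assms])
qed

lemma card_common_nbhd_non_edge:
  assumes x: "x \<in> V" and y: "y \<in> V" and "x \<noteq> y" "\<not> E x y" "v \<in> nbhd x \<inter> nbhd y"
  shows "card (nbhd x \<inter> nbhd y) = c 2"
proof -
  have dist: "gdist E x y = 2"
    using assms by (intro gdist_eq_2[of x y v]) (auto simp: nbhd_def intro: edge_sym)
  have "{u\<in>V. E y u \<and> gdist E x u + 1 = gdist E x y} = nbhd x \<inter> nbhd y"
    unfolding nbhd_def dist using gdist_edge edge_if_gdist_eq_1 x by auto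
  then show ?thesis
    using intersection_numbers(1)[OF x y] by (simp add: dist)
qed

lemma walk_ends_in_closed_nbhd:
  assumes "(E ^^ m) u w" and closed: "\<And>u v w. E u v \<Longrightarrow> E v w \<Longrightarrow> u \<noteq> w \<Longrightarrow> E u w"
  shows "w = u \<or> E u w"
  using assms(1)
proof (induction m arbitrary: w)
  case (Suc m)
  then obtain v where "(E ^^ m) u v" "E v w" by auto
  with Suc.IH closed show ?case by (metis edge_sym)
qed simp

lemma diameter_le_1_if_triangles_closed:
  assumes closed: "\<And>u v w. E u v \<Longrightarrow> E v w \<Longrightarrow> u \<noteq> w \<Longrightarrow> E u w"
  shows "diameter V E \<le> 1"
proof -
  have dist_le_1: "gdist E u v \<le> 1" if uv: "u \<in> V" "v \<in> V" for u v
  proof -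
    obtain m where "(E ^^ m) u v"
      using connected uv unfolding connected_graph_def by blast
    then have "v = u \<or> E u v"
      using closed by (rule walk_ends_in_closed_nbhd)
    then show ?thesis using gdist_self gdist_edge by auto
  qed
  have dists: "{gdist E u v | u v. u \<in> V \<and> v \<in> V} = (\<lambda>(u, v). gdist E u v) ` (V \<times> V)"
    by (auto simp: image_iff)
  have "V \<times> V \<noteq> {}"
    using nonempty by simp
  moreover have "\<forall>p \<in> V \<times> V. (\<lambda>(u, v). gdist E u v) p \<le> 1"
    using dist_le_1 by auto
  ultimately show ?thesis
    unfolding diameter_def dists using finite_V
    by (simp add: Max_le_iff)
qed

text \<open>The \<lambda> common neighbours of y and z lie in nbhd x \<inter> nbhd z - {y} or in
  nbhd y - nbhd x - {x, z}, which have \<mu> - 1 and k - \<lambda> - 2 elements.\<close>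

lemma a1_bound_at_dist2:
  assumes "E x y" "E y z" "z \<noteq> x" "\<not> E x z"
  shows "2 * a 1 + 3 \<le> b 0 + c 2"
proof -
  have x: "x \<in> V" and y: "y \<in> V" and z: "z \<in> V" using edge_in_V assms by auto
  have y_common: "y \<in> nbhd x \<inter> nbhd z"
    using assms x y z by (auto simp: nbhd_def intro: edge_sym)
  have xz_private: "{x, z} \<subseteq> nbhd y - nbhd x"
    using assms x z no_loop by (auto simp: nbhd_def intro: edge_sym)
  have "card (nbhd x \<inter> nbhd z) = c 2"
    using card_common_nbhd_non_edge[OF x z] assms(3,4) y_common by auto
  then have card1: "card (nbhd x \<inter> nbhd z - {y}) = c 2 - 1"
    using y_common finite_nbhd by simp
  have "card (nbhd y - nbhd x) = b 0 - a 1"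
    using card_Diff_subset_Int[of "nbhd y" "nbhd x"] finite_nbhd card_nbhd[OF y]
      card_common_nbhd_edge[OF assms(1)] by (simp add: Int_commute)
  then have card2: "card (nbhd y - nbhd x - {x, z}) = b 0 - a 1 - 2"
    using xz_private finite_nbhd assms(3) by (simp add: card_Diff_subset)
  have "card {x, z} \<le> card (nbhd y - nbhd x)"
    using xz_private finite_nbhd by (intro card_mono) auto
  then have two_le: "2 \<le> b 0 - a 1"
    using \<open>card (nbhd y - nbhd x) = b 0 - a 1\<close> assms(3) by simp
  have c2_pos: "1 \<le> c 2"
    using \<open>card (nbhd x \<inter> nbhd z) = c 2\<close> y_common finite_nbhd
    by (metis One_nat_def Suc_leI card_gt_0_iff empty_iff finite_Int)
  have "nbhd y \<inter> nbhd z \<subseteq> (nbhd x \<inter> nbhd z - {y}) \<union> (nbhd y - nbhd x - {x, z})"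
    using no_loop assms(4) by (auto simp: nbhd_def dest: edge_sym)
  then have "card (nbhd y \<inter> nbhd z) \<le> card ((nbhd x \<inter> nbhd z - {y}) \<union> (nbhd y - nbhd x - {x, z}))"
    using finite_nbhd by (intro card_mono) auto
  also have "\<dots> \<le> card (nbhd x \<inter> nbhd z - {y}) + card (nbhd y - nbhd x - {x, z})"
    by (rule card_Un_le)
  finally have "card (nbhd y \<inter> nbhd z) \<le> card (nbhd x \<inter> nbhd z - {y}) + card (nbhd y - nbhd x - {x, z})" .
  then have "a 1 \<le> (c 2 - 1) + (b 0 - a 1 - 2)"
    using card_common_nbhd_edge[OF assms(2)] card1 card2 by simp
  then show ?thesis using two_le c2_pos by linarith
qed

text \<open>The hypothesis forces \<lambda> = k - 1, so along every edge u v all neighbours of v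
  other than u are neighbours of u.\<close>

lemma triangles_closed_if_nbhd_covered:
  assumes "E x y" "nbhd y \<subseteq> insert x (nbhd x)"
    and "E u v" "E v w" "u \<noteq> w"
  shows "E u w"
proof -
  have y: "y \<in> V" using edge_in_V assms(1) by auto
  have "nbhd y \<subseteq> insert x (nbhd x \<inter> nbhd y)"
    using assms(2) by blast
  then have "card (nbhd y) \<le> card (insert x (nbhd x \<inter> nbhd y))"
    using finite_nbhd by (intro card_mono) auto
  also have "\<dots> \<le> Suc (card (nbhd x \<inter> nbhd y))"
    using finite_nbhd by (simp add: card_insert_if)
  finally have "card (nbhd y) \<le> Suc (card (nbhd x \<inter> nbhd y))" .
  then have "b 0 \<le> Suc (a 1)"
    using card_nbhd[OF y] card_common_nbhd_edge[OF assms(1)] by simp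
  have v: "v \<in> V" and u: "u \<in> V" and w: "w \<in> V" using edge_in_V assms(3,4) by auto
  have sub: "nbhd u \<inter> nbhd v \<subseteq> nbhd v - {u}"
    using no_loop by (auto simp: nbhd_def)
  have "card (nbhd v - {u}) = b 0 - 1"
    using card_nbhd[OF v] u assms(3) by (simp add: nbhd_def edge_sym)
  moreover have "card (nbhd u \<inter> nbhd v) = a 1"
    using card_common_nbhd_edge[OF assms(3)] .
  moreover have "a 1 \<le> b 0 - 1"
    using card_mono[OF _ sub] finite_nbhd calculation by simp
  ultimately have "nbhd u \<inter> nbhd v = nbhd v - {u}"
    using card_subset_eq[OF _ sub] finite_nbhd \<open>b 0 \<le> Suc (a 1)\<close> by simp
  then show ?thesis
    using assms(4,5) w by (auto simp: nbhd_def)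
qed

lemma a1_bound:
  assumes "E x y" and "diameter V E \<ge> 2"
  shows "2 * a 1 + 3 \<le> b 0 + c 2"
proof (cases "nbhd y \<subseteq> insert x (nbhd x)")
  case True
  then have "diameter V E \<le> 1"
    using triangles_closed_if_nbhd_covered[OF assms(1)]
    by (intro diameter_le_1_if_triangles_closed) blast
  with assms(2) show ?thesis by simp
next
  case False
  then obtain z where "E y z" "z \<noteq> x" "\<not> E x z"
    by (auto simp: nbhd_def)
  with assms(1) show ?thesis by (rule a1_bound_at_dist2)
qed

lemma card_common_nbhd_bound:
  assumes "x \<in> V" "y \<in> V" "x \<noteq> y" "diameter V E \<ge> 2"
  shows "b 0 - c 2 \<le> 2 * (b 0 - card (nbhd x \<inter> nbhd y))"
proof -
  consider "E x y" | "\<not> E x y" "nbhd x \<inter> nbhd y = {}" | "\<not> E x y" "nbhd x \<inter> nbhd y \<noteq> {}"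
    by blast
  then show ?thesis
  proof cases
    case 1
    then show ?thesis
      using a1_bound[OF 1 assms(4)] card_common_nbhd_edge[OF 1] by arith
  next
    case 2
    then show ?thesis by simp
  next
    case 3
    then have "card (nbhd x \<inter> nbhd y) = c 2"
      using card_common_nbhd_non_edge[OF assms(1-3)] by blast
    then show ?thesis by simp
  qed
qed

lemma nbhd_sym_diff_moved:
  assumes \<sigma>: "is_automorphism V E \<sigma>" and x: "x \<in> V"
  shows "(nbhd x - nbhd (\<sigma> x)) \<union> (nbhd (\<sigma> x) - nbhd x) \<subseteq> {v\<in>V. \<sigma> v \<noteq> v}"
proof
  fix u assume u: "u \<in> (nbhd x - nbhd (\<sigma> x)) \<union> (nbhd (\<sigma> x) - nbhd x)"
  then have "u \<in> V" by (auto simp: nbhd_def)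
  moreover have "E x u \<longleftrightarrow> E (\<sigma> x) (\<sigma> u)"
    using \<sigma> x \<open>u \<in> V\<close> unfolding is_automorphism_def by blast
  ultimately show "u \<in> {v\<in>V. \<sigma> v \<noteq> v}"
    using u by (auto simp: nbhd_def)
qed

lemma card_moved_ge:
  assumes \<sigma>: "is_automorphism V E \<sigma>" and x: "x \<in> V" "\<sigma> x \<noteq> x"
    and "diameter V E \<ge> 2"
  shows "b 0 - c 2 \<le> card {v\<in>V. \<sigma> v \<noteq> v}"
proof -
  let ?y = "\<sigma> x" and ?common = "card (nbhd x \<inter> nbhd (\<sigma> x))"
  have y: "?y \<in> V" using \<sigma> x unfolding is_automorphism_def bij_betw_def by auto
  have "card (nbhd x - nbhd ?y) = b 0 - ?common"
    using card_Diff_subset_Int[of "nbhd x" "nbhd ?y"] finite_nbhd card_nbhd[OF x(1)] by simp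
  moreover have "card (nbhd ?y - nbhd x) = b 0 - ?common"
    using card_Diff_subset_Int[of "nbhd ?y" "nbhd x"] finite_nbhd card_nbhd[OF y] by (simp add: Int_commute)
  moreover have "card ((nbhd x - nbhd ?y) \<union> (nbhd ?y - nbhd x))
      = card (nbhd x - nbhd ?y) + card (nbhd ?y - nbhd x)"
    using finite_nbhd by (intro card_Un_disjoint) auto
  moreover have "card ((nbhd x - nbhd ?y) \<union> (nbhd ?y - nbhd x)) \<le> card {v\<in>V. \<sigma> v \<noteq> v}"
    using nbhd_sym_diff_moved[OF \<sigma> x(1)] finite_V by (intro card_mono) auto
  ultimately have "2 * (b 0 - ?common) \<le> card {v\<in>V. \<sigma> v \<noteq> v}"
    by simp
  then show ?thesis
    using card_common_nbhd_bound[OF x(1) y] x(2) assms(4) by (metis le_trans)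
qed

lemma motion_ge_degree_minus_mu:
  assumes "diameter V E \<ge> 2"
  shows "enat (b 0 - c 2) \<le> motion V E"
  unfolding motion_def
  using card_moved_ge assms by (auto intro!: INF_greatest)

end

theorem corollary4p3:
  fixes V :: "'a set" and E :: "'a \<Rightarrow> 'a \<Rightarrow> bool"
    and a b c :: "nat \<Rightarrow> nat" and \<gamma> \<delta> :: real
  assumes "distance_regular_with V E a b c"
    and "diameter V E \<ge> 2"
    and "\<gamma> > 0" and "\<delta> > 0"
    and "real (b 0) > \<gamma> * real (card V)"
    and "real (c 2) \<le> (1 - \<delta>) * real (b 0)"
  shows "motion V E \<ge> enat (nat \<lceil>\<gamma> * \<delta> * real (card V)\<rceil>)"
proof -
  interpret distance_regular_graph V E a b c
    using assms(1) by unfold_locales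
  have "\<gamma> * \<delta> * real (card V) \<le> \<delta> * real (b 0)"
    using assms(4,5) by (simp add: mult.commute mult.left_commute less_imp_le)
  also have "\<dots> \<le> real (b 0 - c 2)"
    using assms(6) by (simp add: algebra_simps)
  finally have "nat \<lceil>\<gamma> * \<delta> * real (card V)\<rceil> \<le> b 0 - c 2"
    by simp
  then show ?thesis
    using motion_ge_degree_minus_mu[OF assms(2)] by (meson enat_ord_simps(1) order_trans)
qed

end
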